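(* Let $\operatorname{rk}L=2$ with basis $e_1,e_2$, dual basis $f_1,f_2$, $x_i=X^{f_i}$, $k=\omega(e_1,e_2)\ne0$, and let $m_1,m_2\ge0$. Then: (1) $\mathcal U(\{m_1\times e_2,\ m_2\times(-e_2)\})$ consists exactly of the Laurent polynomials $W=\sum_l c_l(x_1)x_2^l$, $c_l\in\mathcal Q[x_1^{\pm1}]$, such that $c_l$ is divisible by $(1+x_1^k)^{-m_1l}$ for $l\le0$ and by $(1+x_1^k)^{m_2l}$ for $l\ge0$; (2) $\mathcal U(\{m_1\times e_2,\ m_2\times(-e_2)\})=\mathcal Q\bigl[x_1^{\pm1},\ x_2(1+x_1^k)^{m_2},\ (1+x_1^k)^{m_1}/x_2\bigr]$.
   Context: For a lattice $L$ with skew-symmetric integral bilinear form $\omega$: $L^*=\mathrm{Hom}(L,\mathbb Z)$, $(\cdot,\cdot)$ the canonical pairing; $\mathcal Q=\mathbb Q(e^{2\pi i\mathbb Q})$ is $\mathbb Q$ with all roots of unity adjoined; $\mathcal Q[L^*]$ is the group algebra of $L^*$ with monomials $X^m$, and $\mathbb K_L$ its fraction field. For $v\in L$, $\mu_v^*$ is the $\mathcal Q$-algebra automorphism of $\mathbb K_L$ with $\mu_v^*(X^m)=X^m(1+X^{\omega(\cdot,v)})^{-(m,v)}$, where $\omega(\cdot,v)\in L^*$ is $w\mapsto\omega(w,v)$; e.g. $\mu_{e_2}^*(x_1,x_2)=(x_1,x_2/(1+x_1^k))$ and $\mu_{-e_2}^*(x_1,x_2)=(x_1,x_2(1+x_1^{-k}))$.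 An exchange collection is a finite tuple of vectors with multiplicity function $m_V$; $\{m_1\times u_1,m_2\times u_2\}$ denotes the collection with $u_j$ of multiplicity $m_j$. The upper bound is $\mathcal U(V)=\mathcal Q[L^*]\cap\bigcap_{v\in L}(\mu_v^* )^{m_V(v)}(\mathcal Q[L^*])\subset\mathbb K_L$. $\mathcal Q[g_1,\dots]$ denotes the $\mathcal Q$-subalgebra generated by the $g_i$. *)

theory Defs
  imports Complex_Main "HOL-Computational_Algebra.Polynomial" "HOL-Computational_Algebra.Fraction_Field"
begin

text \<open>The coefficient field: Q with all roots of unity adjoined, as the smallest
  subfield of the complex numbers containing all roots of unity.\<close>
definition Qcyc :: "complex set" where
  "Qcyc = \<Inter> {F. (\<forall>z. (\<exists>n>0. z ^ n = 1) \<longrightarrow> z \<in> F)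
                 \<and> (\<forall>x\<in>F. \<forall>y\<in>F. x + y \<in> F \<and> x * y \<in> F)
                 \<and> (\<forall>x\<in>F. - x \<in> F)
                 \<and> (\<forall>x\<in>F. x \<noteq> 0 \<longrightarrow> inverse x \<in> F)}"

text \<open>L = Z^2 with basis e1=(1,0), e2=(0,1); L* = Z^2 with dual basis f1, f2.
  The ambient field: rational functions in x1, x2 (fraction field of C[x1][x2]);
  it contains K_L (coefficients in Qcyc) and Q[L*].\<close>
type_synonym K = "complex poly poly fract"

definition cK :: "complex \<Rightarrow> K" where "cK c = Fract [:[:c:]:] 1"
definition x1 :: K where "x1 = Fract [:[:0, 1:]:] 1"
definition x2 :: K where "x2 = Fract [:0, 1:] 1"

text \<open>Monomial X^m for m = a f1 + b f2.\<close>
definition monoX :: "int \<times> int \<Rightarrow> K" where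
  "monoX m = x1 powi (fst m) * x2 powi (snd m)"

definition LaurentPolys :: "K set" where
  "LaurentPolys = {(\<Sum>m\<in>S. cK (c m) * monoX m) | S c. finite S \<and> (\<forall>m\<in>S. c m \<in> Qcyc)}"

definition LaurentPolys1 :: "K set" where
  "LaurentPolys1 = {(\<Sum>a\<in>S. cK (c a) * x1 powi a) | S c. finite S \<and> (\<forall>a\<in>S. c a \<in> Qcyc)}"

definition omega :: "int \<Rightarrow> int \<times> int \<Rightarrow> int \<times> int \<Rightarrow> int" where
  "omega k u v = k * (fst u * snd v - snd u * fst v)"

definition subst2 :: "K \<Rightarrow> K \<Rightarrow> complex poly poly \<Rightarrow> K" where
  "subst2 y1 y2 p = poly (map_poly (\<lambda>q. poly (map_poly cK q) y1) p) y2"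

text \<open>mu_v^*: X^m \<mapsto> X^m (1 + X^{omega(.,v)})^{-(m,v)}, extended to the fraction field.\<close>
definition mu :: "int \<Rightarrow> int \<times> int \<Rightarrow> K \<Rightarrow> K" where
  "mu k v f =
    (let w = (omega k (1,0) v, omega k (0,1) v);
         y1 = x1 * (1 + monoX w) powi (- fst v);
         y2 = x2 * (1 + monoX w) powi (- snd v)
     in SOME r. \<exists>p q. q \<noteq> 0 \<and> f = Fract p q \<and> r = subst2 y1 y2 p / subst2 y1 y2 q)"

text \<open>Upper bound of an exchange collection given by its multiplicity function mV.\<close>
definition upper_bound :: "int \<Rightarrow> (int \<times> int \<Rightarrow> nat) \<Rightarrow> K set" where
  "upper_bound k mV = LaurentPolys \<inter> (\<Inter>v. ((mu k v) ^^ (mV v)) ` LaurentPolys)"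

definition coll2 :: "nat \<Rightarrow> nat \<Rightarrow> int \<times> int \<Rightarrow> nat" where
  "coll2 m1 m2 v = (if v = (0, 1) then m1 else if v = (0, -1) then m2 else 0)"

inductive_set alg_gen :: "K set \<Rightarrow> K set" for G where
  const: "c \<in> Qcyc \<Longrightarrow> cK c \<in> alg_gen G"
| gen: "g \<in> G \<Longrightarrow> g \<in> alg_gen G"
| add: "a \<in> alg_gen G \<Longrightarrow> b \<in> alg_gen G \<Longrightarrow> a + b \<in> alg_gen G"
| mult: "a \<in> alg_gen G \<Longrightarrow> b \<in> alg_gen G \<Longrightarrow> a * b \<in> alg_gen G"

end

theory Submission
  imports Defs "HOL-Computational_Algebra.Polynomial_Factorial"
begin

text \<open>
  Both mutations are ring endomorphisms fixing \<open>x1\<close> and rescaling \<open>x2\<close>: with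
  \<open>u = 1 + x1^k\<close>, \<open>\<mu>_e2\<close> sends \<open>x2\<close> to \<open>x2 / u\<close> and \<open>\<mu>_(-e2)\<close> sends it to
  \<open>x2 x1^(-k) u\<close>. So \<open>\<mu>_e2^m1\<close> multiplies the \<open>l\<close>-th coefficient of a Laurent polynomial
  \<open>\<Sum> p_l x2^l\<close> by \<open>u^(-m1 l)\<close>, and \<open>\<mu>_(-e2)^m2\<close> multiplies it by
  \<open>x1^(-k m2 l) u^(m2 l)\<close>. Since expansions in powers of \<open>x2\<close> with coefficients in
  \<open>\<complex>(x1)\<close> are unique, a Laurent polynomial lies in both images exactly when its
  \<open>l\<close>-th coefficient is divisible by \<open>u^(-m1 l)\<close> for \<open>l \<le> 0\<close> and by \<open>u^(m2 l)\<close>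
  for \<open>l \<ge> 0\<close>. Such a term is a Laurent polynomial in \<open>x1\<close> times a power of \<open>x2 u^m2\<close>
  or of \<open>u^m1 / x2\<close>. Conversely, both images are subalgebras containing the generators,
  which have the explicit preimages \<open>x2 u^(m1+m2)\<close>, \<open>1 / x2\<close> under \<open>\<mu>_e2^m1\<close> and
  \<open>x2 x1^(k m2)\<close>, \<open>u^m1 (1 + x1^(-k))^m2 / x2\<close> under \<open>\<mu>_(-e2)^m2\<close>.
\<close>

lemma power_int_inverse_power_nonpos:
  fixes u :: "'a::field"
  assumes "l \<le> 0"
  shows "(inverse u ^ m) powi l = u ^ nat (- int m * l)"
proof -
  obtain n where l: "l = - int n"
    using assms by (metis neg_int_cases nonpos_int_cases)
  then show ?thesis
    by (simp add: power_int_minus power_mult power_inverse nat_mult_distrib)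
qed

lemma power_int_power_nonneg:
  fixes u :: "'a::field"
  assumes "l \<ge> 0"
  shows "(u ^ m) powi l = u ^ nat (int m * l)"
proof -
  obtain n where l: "l = int n"
    using assms by (metis nonneg_int_cases)
  then show ?thesis
    by (simp add: power_mult nat_mult_distrib)
qed

definition is_ring_hom :: "('a::comm_ring_1 \<Rightarrow> 'b::comm_ring_1) \<Rightarrow> bool" where
  "is_ring_hom g \<longleftrightarrow> (\<forall>a b. g (a + b) = g a + g b) \<and> (\<forall>a b. g (a * b) = g a * g b) \<and> g 1 = 1"

context
  fixes g :: "'a::comm_ring_1 \<Rightarrow> 'b::comm_ring_1"
  assumes hom: "is_ring_hom g"
begin

lemma is_ring_hom_add: "g (a + b) = g a + g b"
  using hom by (simp add: is_ring_hom_def)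

lemma is_ring_hom_mult: "g (a * b) = g a * g b"
  using hom by (simp add: is_ring_hom_def)

lemma is_ring_hom_1: "g 1 = 1"
  using hom by (simp add: is_ring_hom_def)

lemma is_ring_hom_0: "g 0 = 0"
  using is_ring_hom_add[of 0 0] by simp

lemma is_ring_hom_uminus: "g (- a) = - g a"
  using is_ring_hom_add[of "- a" a] by (simp add: is_ring_hom_0 eq_neg_iff_add_eq_0)

lemma is_ring_hom_power: "g (a ^ n) = g a ^ n"
  by (induction n) (simp_all add: is_ring_hom_1 is_ring_hom_mult)

lemma is_ring_hom_sum: "g (sum f S) = (\<Sum>x\<in>S. g (f x))"
  by (induction S rule: infinite_finite_induct) (simp_all add: is_ring_hom_0 is_ring_hom_add)

lemma is_ring_hom_poly_eval: "is_ring_hom (\<lambda>p. poly (map_poly g p) y)"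
proof -
  have add: "poly (map_poly g (p + q)) y = poly (map_poly g p) y + poly (map_poly g q) y" for p q
    by (induction p q rule: poly_induct2)
       (simp_all add: map_poly_pCons is_ring_hom_0 is_ring_hom_add algebra_simps)
  have smult: "poly (map_poly g (smult a q)) y = g a * poly (map_poly g q) y" for a q
    by (induction q) (simp_all add: map_poly_pCons is_ring_hom_0 is_ring_hom_mult algebra_simps)
  have mult: "poly (map_poly g (p * q)) y = poly (map_poly g p) y * poly (map_poly g q) y" for p q
    by (induction p) (simp_all add: add smult map_poly_pCons is_ring_hom_0 algebra_simps)
  show ?thesis
    by (simp add: is_ring_hom_def add mult is_ring_hom_1)
qed

end

context
  fixes g :: "'a::field \<Rightarrow> 'b::field"
  assumes hom: "is_ring_hom g"
begin

lemma is_ring_hom_inverse: "g (inverse a) = inverse (g a)"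
proof (cases "a = 0")
  case True
  then show ?thesis by (simp add: is_ring_hom_0[OF hom])
next
  case False
  then have "g a * g (inverse a) = 1"
    by (simp add: is_ring_hom_mult[OF hom, symmetric] is_ring_hom_1[OF hom])
  then show ?thesis by (metis inverse_unique)
qed

lemma is_ring_hom_divide: "g (a / b) = g a / g b"
  by (simp add: divide_inverse is_ring_hom_mult[OF hom] is_ring_hom_inverse)

lemma is_ring_hom_power_int: "g (a powi n) = g a powi n"
  by (simp add: power_int_def is_ring_hom_power[OF hom] is_ring_hom_inverse)

end

lemma is_ring_hom_funpow:
  fixes g :: "'a::comm_ring_1 \<Rightarrow> 'a"
  shows "is_ring_hom g \<Longrightarrow> is_ring_hom (g ^^ n)"
  by (induction n) (simp_all add: is_ring_hom_def)

section \<open>The coefficient field and the embedding of polynomials\<close>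

lemma Qcyc_add: "x \<in> Qcyc \<Longrightarrow> y \<in> Qcyc \<Longrightarrow> x + y \<in> Qcyc"
  unfolding Qcyc_def by blast

lemma Qcyc_mult: "x \<in> Qcyc \<Longrightarrow> y \<in> Qcyc \<Longrightarrow> x * y \<in> Qcyc"
  unfolding Qcyc_def by blast

lemma one_in_Qcyc: "1 \<in> Qcyc"
  unfolding Qcyc_def by force

lemma zero_in_Qcyc: "0 \<in> Qcyc"
  unfolding Qcyc_def by force

lemma cK_to_fract: "cK c = to_fract [:[:c:]:]"
  by (simp add: cK_def to_fract_def)

lemma x1_to_fract: "x1 = to_fract [:[:0, 1:]:]"
  by (simp add: x1_def to_fract_def)

lemma x2_to_fract: "x2 = to_fract [:0, 1:]"
  by (simp add: x2_def to_fract_def)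

lemma to_fract_power: "to_fract (p ^ n) = to_fract p ^ n"
  by (induction n) simp_all

lemma is_ring_hom_cK: "is_ring_hom cK"
  by (simp add: is_ring_hom_def cK_to_fract flip: to_fract_add to_fract_mult to_fract_1)
     (simp add: one_pCons)

lemmas cK_0 = is_ring_hom_0[OF is_ring_hom_cK]
  and cK_1 = is_ring_hom_1[OF is_ring_hom_cK]
  and cK_add = is_ring_hom_add[OF is_ring_hom_cK]
  and cK_mult = is_ring_hom_mult[OF is_ring_hom_cK]

lemma x1_nonzero: "x1 \<noteq> 0"
  by (simp add: x1_to_fract)

lemma x2_nonzero: "x2 \<noteq> 0"
  by (simp add: x2_to_fract)

definition Qcyc_span :: "('i \<Rightarrow> K) \<Rightarrow> K set" where
  "Qcyc_span f = {(\<Sum>m\<in>S. cK (c m) * f m) | S c. finite S \<and> (\<forall>m\<in>S. c m \<in> Qcyc)}"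

lemma LaurentPolys_eq_span: "LaurentPolys = Qcyc_span monoX"
  by (simp add: Qcyc_span_def LaurentPolys_def)

lemma LaurentPolys1_eq_span: "LaurentPolys1 = Qcyc_span (\<lambda>a. x1 powi a)"
  by (simp add: Qcyc_span_def LaurentPolys1_def)

lemma Qcyc_spanI: "finite S \<Longrightarrow> \<forall>m\<in>S. c m \<in> Qcyc \<Longrightarrow> (\<Sum>m\<in>S. cK (c m) * f m) \<in> Qcyc_span f"
  unfolding Qcyc_span_def by blast

lemma Qcyc_spanE:
  assumes "x \<in> Qcyc_span f"
  obtains S c where "finite S" "\<forall>m\<in>S. c m \<in> Qcyc" "x = (\<Sum>m\<in>S. cK (c m) * f m)"
  using assms unfolding Qcyc_span_def by blast

lemma Qcyc_span_term: "c \<in> Qcyc \<Longrightarrow> cK c * f m \<in> Qcyc_span f"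
  unfolding Qcyc_span_def by (intro CollectI exI[of _ "{m}"] exI[of _ "\<lambda>_. c"]) auto

lemma Qcyc_span_0: "0 \<in> Qcyc_span f"
  unfolding Qcyc_span_def by (intro CollectI exI[of _ "{}"]) auto

lemma Qcyc_span_add:
  assumes "x \<in> Qcyc_span f" and "y \<in> Qcyc_span f"
  shows "x + y \<in> Qcyc_span f"
proof -
  obtain S c where S: "finite S" "\<forall>m\<in>S. c m \<in> Qcyc" and x: "x = (\<Sum>m\<in>S. cK (c m) * f m)"
    using assms(1) by (rule Qcyc_spanE)
  obtain T d where T: "finite T" "\<forall>m\<in>T. d m \<in> Qcyc" and y: "y = (\<Sum>m\<in>T. cK (d m) * f m)"
    using assms(2) by (rule Qcyc_spanE)
  define c' where "c' m = (if m \<in> S then c m else 0)" for m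
  define d' where "d' m = (if m \<in> T then d m else 0)" for m
  have "x = (\<Sum>m\<in>S \<union> T. cK (c' m) * f m)"
    unfolding x using S T by (intro sum.mono_neutral_cong_left) (auto simp: c'_def cK_0)
  moreover have "y = (\<Sum>m\<in>S \<union> T. cK (d' m) * f m)"
    unfolding y using S T by (intro sum.mono_neutral_cong_left) (auto simp: d'_def cK_0)
  ultimately have "x + y = (\<Sum>m\<in>S \<union> T. cK (c' m + d' m) * f m)"
    by (simp add: cK_add distrib_right sum.distrib)
  moreover have "\<forall>m\<in>S \<union> T. c' m + d' m \<in> Qcyc"
    using S T by (auto simp: c'_def d'_def intro: Qcyc_add zero_in_Qcyc)
  ultimately show ?thesis
    using S T by (metis Qcyc_spanI finite_UnI)
qed

lemma Qcyc_span_sum: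
  fixes g :: "_ \<Rightarrow> K"
  shows "(\<And>t. t \<in> T \<Longrightarrow> g t \<in> Qcyc_span f) \<Longrightarrow> sum g T \<in> Qcyc_span f"
  by (induction T rule: infinite_finite_induct) (auto simp: Qcyc_span_0 Qcyc_span_add)

lemma Qcyc_span_mult:
  assumes f_mult: "\<And>a b. f (op a b) = f a * f b"
    and x: "x \<in> Qcyc_span f" and y: "y \<in> Qcyc_span f"
  shows "x * y \<in> Qcyc_span f"
proof -
  obtain S c where S: "finite S" "\<forall>m\<in>S. c m \<in> Qcyc" and x: "x = (\<Sum>m\<in>S. cK (c m) * f m)"
    using x by (rule Qcyc_spanE)
  obtain T d where T: "finite T" "\<forall>m\<in>T. d m \<in> Qcyc" and y: "y = (\<Sum>m\<in>T. cK (d m) * f m)"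
    using y by (rule Qcyc_spanE)
  have "x * y = (\<Sum>m\<in>S. \<Sum>n\<in>T. cK (c m * d n) * f (op m n))"
    unfolding x y sum_product by (intro sum.cong refl) (simp add: f_mult cK_mult mult_ac)
  also have "\<dots> \<in> Qcyc_span f"
    using S T by (intro Qcyc_span_sum Qcyc_span_term Qcyc_mult) auto
  finally show ?thesis .
qed

lemma monoX_add: "monoX (fst a + fst b, snd a + snd b) = monoX a * monoX b"
  by (simp add: monoX_def power_int_add x1_nonzero x2_nonzero algebra_simps)

lemma LaurentPolys_add: "x \<in> LaurentPolys \<Longrightarrow> y \<in> LaurentPolys \<Longrightarrow> x + y \<in> LaurentPolys"
  by (simp add: LaurentPolys_eq_span Qcyc_span_add)

lemma LaurentPolys_mult: "x \<in> LaurentPolys \<Longrightarrow> y \<in> LaurentPolys \<Longrightarrow> x * y \<in> LaurentPolys"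
  unfolding LaurentPolys_eq_span
  by (rule Qcyc_span_mult[where op="\<lambda>a b. (fst a + fst b, snd a + snd b)", OF monoX_add])

lemma cK_in_LaurentPolys: "c \<in> Qcyc \<Longrightarrow> cK c \<in> LaurentPolys"
  using Qcyc_span_term[of c monoX "(0, 0)"] by (simp add: LaurentPolys_eq_span monoX_def)

lemma monoX_in_LaurentPolys: "monoX m \<in> LaurentPolys"
  using Qcyc_span_term[OF one_in_Qcyc, of monoX m] by (simp add: LaurentPolys_eq_span cK_1)

lemma x1_power_int_in_LaurentPolys: "x1 powi a \<in> LaurentPolys"
  using monoX_in_LaurentPolys[of "(a, 0)"] by (simp add: monoX_def)

lemma x2_power_int_in_LaurentPolys: "x2 powi a \<in> LaurentPolys"
  using monoX_in_LaurentPolys[of "(0, a)"] by (simp add: monoX_def)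

lemma LaurentPolys_power: "x \<in> LaurentPolys \<Longrightarrow> x ^ n \<in> LaurentPolys"
  using cK_in_LaurentPolys[OF one_in_Qcyc]
  by (induction n) (simp_all add: cK_1 LaurentPolys_mult)

lemma one_plus_x1_power_int_in_LaurentPolys: "1 + x1 powi k \<in> LaurentPolys"
  using LaurentPolys_add x1_power_int_in_LaurentPolys[of 0] x1_power_int_in_LaurentPolys
  by simp

lemma LaurentPolys1_add: "x \<in> LaurentPolys1 \<Longrightarrow> y \<in> LaurentPolys1 \<Longrightarrow> x + y \<in> LaurentPolys1"
  by (simp add: LaurentPolys1_eq_span Qcyc_span_add)

lemma LaurentPolys1_mult: "x \<in> LaurentPolys1 \<Longrightarrow> y \<in> LaurentPolys1 \<Longrightarrow> x * y \<in> LaurentPolys1"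
  unfolding LaurentPolys1_eq_span by (rule Qcyc_span_mult[where op="(+)"])
    (simp_all add: power_int_add x1_nonzero)

lemma x1_power_int_in_LaurentPolys1: "x1 powi a \<in> LaurentPolys1"
  using Qcyc_span_term[OF one_in_Qcyc, of "\<lambda>a. x1 powi a" a]
  by (simp add: LaurentPolys1_eq_span cK_1)

lemma LaurentPolys1_power: "x \<in> LaurentPolys1 \<Longrightarrow> x ^ n \<in> LaurentPolys1"
  using x1_power_int_in_LaurentPolys1[of 0]
  by (induction n) (simp_all add: LaurentPolys1_mult)

lemma zero_in_LaurentPolys1: "0 \<in> LaurentPolys1"
  by (simp add: LaurentPolys1_eq_span Qcyc_span_0)

lemma one_plus_x1_power_int_in_LaurentPolys1: "1 + x1 powi k \<in> LaurentPolys1"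
  using LaurentPolys1_add x1_power_int_in_LaurentPolys1[of 0] x1_power_int_in_LaurentPolys1
  by simp

lemma LaurentPolys_x2_expansion:
  assumes "P \<in> LaurentPolys"
  obtains S p where "finite S" "\<forall>l\<in>S. p l \<in> LaurentPolys1" "P = (\<Sum>l\<in>S. p l * x2 powi l)"
proof -
  obtain T c where T: "finite T" "\<forall>m\<in>T. c m \<in> Qcyc" and P: "P = (\<Sum>m\<in>T. cK (c m) * monoX m)"
    using assms unfolding LaurentPolys_eq_span by (rule Qcyc_spanE)
  define p where "p l = (\<Sum>m\<in>{m\<in>T. snd m = l}. cK (c m) * x1 powi (fst m))" for l
  have "P = (\<Sum>l\<in>snd ` T. \<Sum>m\<in>{m\<in>T. snd m = l}. cK (c m) * monoX m)"
    unfolding P by (rule sum.image_gen[OF T(1)])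
  also have "\<dots> = (\<Sum>l\<in>snd ` T. p l * x2 powi l)"
    unfolding p_def sum_distrib_right by (intro sum.cong refl) (auto simp: monoX_def mult_ac)
  finally have "P = (\<Sum>l\<in>snd ` T. p l * x2 powi l)" .
  moreover have "p l \<in> LaurentPolys1" for l
    unfolding p_def LaurentPolys1_eq_span using T by (auto intro!: Qcyc_span_sum Qcyc_span_term)
  ultimately show thesis
    using that T(1) by blast
qed

section \<open>Rational functions in the first variable\<close>

definition of_poly_x1 :: "complex poly \<Rightarrow> K" where
  "of_poly_x1 p = to_fract [:p:]"

definition ratfun_x1 :: "K set" where
  "ratfun_x1 = {of_poly_x1 p / of_poly_x1 q | p q. q \<noteq> 0}"

lemma is_ring_hom_of_poly_x1: "is_ring_hom of_poly_x1"
  by (simp add: is_ring_hom_def of_poly_x1_def flip: to_fract_add to_fract_mult to_fract_1)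

lemmas of_poly_x1_add = is_ring_hom_add[OF is_ring_hom_of_poly_x1]
  and of_poly_x1_mult = is_ring_hom_mult[OF is_ring_hom_of_poly_x1]
  and of_poly_x1_1 = is_ring_hom_1[OF is_ring_hom_of_poly_x1]
  and of_poly_x1_uminus = is_ring_hom_uminus[OF is_ring_hom_of_poly_x1]
  and of_poly_x1_power = is_ring_hom_power[OF is_ring_hom_of_poly_x1]

lemma of_poly_x1_eq_0_iff [simp]: "of_poly_x1 p = 0 \<longleftrightarrow> p = 0"
  by (simp add: of_poly_x1_def)

lemma of_poly_x1_0 [simp]: "of_poly_x1 0 = 0"
  by simp

lemma x1_eq_of_poly_x1: "x1 = of_poly_x1 [:0, 1:]"
  by (simp add: x1_to_fract of_poly_x1_def)

lemma cK_eq_of_poly_x1: "cK c = of_poly_x1 [:c:]"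
  by (simp add: cK_to_fract of_poly_x1_def)

lemma of_poly_x1_times_x2_power: "of_poly_x1 b * x2 ^ n = to_fract (monom b n)"
proof -
  have "of_poly_x1 b * x2 ^ n = to_fract ([:b:] * [:0, 1:] ^ n)"
    by (simp only: of_poly_x1_def x2_to_fract to_fract_power to_fract_mult)
  also have "[:b:] * [:0, 1:] ^ n = monom b n"
    by (simp add: monom_altdef)
  finally show ?thesis .
qed

lemma ratfun_x1I: "q \<noteq> 0 \<Longrightarrow> x = of_poly_x1 p / of_poly_x1 q \<Longrightarrow> x \<in> ratfun_x1"
  unfolding ratfun_x1_def by blast

lemma ratfun_x1E:
  assumes "x \<in> ratfun_x1"
  obtains p q where "q \<noteq> 0" "x = of_poly_x1 p / of_poly_x1 q"
  using assms unfolding ratfun_x1_def by blast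

lemma of_poly_x1_in_ratfun_x1: "of_poly_x1 p \<in> ratfun_x1"
  by (rule ratfun_x1I[of 1]) (simp_all add: of_poly_x1_1)

lemma zero_in_ratfun_x1: "0 \<in> ratfun_x1"
  using of_poly_x1_in_ratfun_x1[of 0] by simp

lemma ratfun_x1_add:
  assumes "x \<in> ratfun_x1" "y \<in> ratfun_x1"
  shows "x + y \<in> ratfun_x1"
proof -
  obtain p q r s where "q \<noteq> 0" "s \<noteq> 0"
    and "x = of_poly_x1 p / of_poly_x1 q" "y = of_poly_x1 r / of_poly_x1 s"
    using assms by (metis ratfun_x1E)
  then show ?thesis
    by (intro ratfun_x1I[of "q * s" _ "p * s + r * q"])
       (simp_all add: of_poly_x1_add of_poly_x1_mult field_simps)
qed

lemma ratfun_x1_mult: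
  assumes "x \<in> ratfun_x1" "y \<in> ratfun_x1"
  shows "x * y \<in> ratfun_x1"
proof -
  obtain p q r s where "q \<noteq> 0" "s \<noteq> 0"
    and "x = of_poly_x1 p / of_poly_x1 q" "y = of_poly_x1 r / of_poly_x1 s"
    using assms by (metis ratfun_x1E)
  then show ?thesis
    by (intro ratfun_x1I[of "q * s" _ "p * r"]) (simp_all add: of_poly_x1_mult)
qed

lemma ratfun_x1_inverse:
  assumes "x \<in> ratfun_x1"
  shows "inverse x \<in> ratfun_x1"
proof -
  obtain p q where "q \<noteq> 0" "x = of_poly_x1 p / of_poly_x1 q"
    using assms by (rule ratfun_x1E)
  then show ?thesis
    by (cases "p = 0") (auto intro: ratfun_x1I[of p _ q] zero_in_ratfun_x1)
qed

lemma ratfun_x1_uminus: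
  assumes "x \<in> ratfun_x1"
  shows "- x \<in> ratfun_x1"
proof -
  obtain p q where "q \<noteq> 0" "x = of_poly_x1 p / of_poly_x1 q"
    using assms by (rule ratfun_x1E)
  then show ?thesis
    by (intro ratfun_x1I[of q _ "- p"]) (simp_all add: of_poly_x1_uminus)
qed

lemma ratfun_x1_diff: "x \<in> ratfun_x1 \<Longrightarrow> y \<in> ratfun_x1 \<Longrightarrow> x - y \<in> ratfun_x1"
  using ratfun_x1_add[of x "- y"] ratfun_x1_uminus[of y] by simp

lemma ratfun_x1_power: "x \<in> ratfun_x1 \<Longrightarrow> x ^ n \<in> ratfun_x1"
  using of_poly_x1_in_ratfun_x1[of 1]
  by (induction n) (simp_all add: ratfun_x1_mult of_poly_x1_1)

lemma ratfun_x1_power_int: "x \<in> ratfun_x1 \<Longrightarrow> x powi n \<in> ratfun_x1"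
  by (simp add: power_int_def ratfun_x1_power ratfun_x1_inverse)

lemma ratfun_x1_sum:
  fixes g :: "_ \<Rightarrow> K"
  shows "(\<And>t. t \<in> T \<Longrightarrow> g t \<in> ratfun_x1) \<Longrightarrow> sum g T \<in> ratfun_x1"
  by (induction T rule: infinite_finite_induct) (simp_all add: ratfun_x1_add zero_in_ratfun_x1)

lemma LaurentPolys1_subset_ratfun_x1: "LaurentPolys1 \<subseteq> ratfun_x1"
proof
  fix x assume "x \<in> LaurentPolys1"
  then obtain S c where "x = (\<Sum>a\<in>S. cK (c a) * x1 powi a)"
    unfolding LaurentPolys1_eq_span by (rule Qcyc_spanE)
  then show "x \<in> ratfun_x1"
    by (simp add: ratfun_x1_sum ratfun_x1_mult ratfun_x1_power_int cK_eq_of_poly_x1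
        x1_eq_of_poly_x1 of_poly_x1_in_ratfun_x1)
qed

lemma one_plus_x1_power_int_in_ratfun_x1: "1 + x1 powi k \<in> ratfun_x1"
  using one_plus_x1_power_int_in_LaurentPolys1 LaurentPolys1_subset_ratfun_x1 by blast

lemma one_plus_x1_power_int_nonzero:
  assumes "k \<noteq> 0"
  shows "1 + x1 powi k \<noteq> 0"
proof -
  have pos: "1 + x1 ^ n \<noteq> 0" if "n > 0" for n
  proof -
    have "poly (1 + [:0, 1:] ^ n) 0 = (1::complex)"
      using that by (simp add: zero_power)
    then have "(1 + [:0, 1:] ^ n :: complex poly) \<noteq> 0"
      by (metis one_neq_zero poly_0)
    moreover have "1 + x1 ^ n = of_poly_x1 (1 + [:0, 1:] ^ n)"
      by (simp add: x1_eq_of_poly_x1 of_poly_x1_add of_poly_x1_power of_poly_x1_1)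
    ultimately show ?thesis by simp
  qed
  show ?thesis
  proof (cases "k > 0")
    case True
    then show ?thesis using pos[of "nat k"] by (simp add: power_int_def)
  next
    case False
    then have "1 + x1 powi k = x1 powi k * (1 + x1 ^ nat (- k))"
      by (simp add: power_int_def x1_nonzero field_simps)
    then show ?thesis using pos[of "nat (- k)"] False assms x1_nonzero by simp
  qed
qed

lemma one_plus_x1_power_int_uminus: "1 + x1 powi (- k) = x1 powi (- k) * (1 + x1 powi k)"
  by (simp add: power_int_minus x1_nonzero field_simps)

section \<open>Uniqueness of expansions in the second variable\<close>

lemma ratfun_x1_common_denominator:
  assumes S: "finite S" and a: "\<forall>l\<in>S. a l \<in> ratfun_x1"
  obtains D b where "D \<noteq> 0" "\<And>l. l \<in> S \<Longrightarrow> a l * of_poly_x1 D = of_poly_x1 (b l)"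
proof -
  obtain p q where pq: "\<forall>l\<in>S. q l \<noteq> 0 \<and> a l = of_poly_x1 (p l) / of_poly_x1 (q l)"
    using a unfolding ratfun_x1_def by (simp add: Bex_def) metis
  define D where "D = (\<Prod>l\<in>S. q l)"
  have "D \<noteq> 0"
    using pq S by (simp add: D_def)
  moreover have "a l * of_poly_x1 D = of_poly_x1 (p l * (\<Prod>j\<in>S - {l}. q j))" if "l \<in> S" for l
  proof -
    have "D = q l * (\<Prod>j\<in>S - {l}. q j)"
      unfolding D_def using S that by (rule prod.remove)
    then show ?thesis
      using pq that by (simp add: of_poly_x1_mult)
  qed
  ultimately show thesis
    by (rule that[of D "\<lambda>l. p l * (\<Prod>j\<in>S - {l}. q j)"])
qed

lemma x2_expansion_eq_0:
  assumes S: "finite S" and a: "\<forall>l\<in>S. a l \<in> ratfun_x1"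
    and sum_0: "(\<Sum>l\<in>S. a l * x2 powi l) = 0"
  shows "\<forall>l\<in>S. a l = 0"
proof -
  txt \<open>Clearing denominators and shifting all exponents by \<open>N\<close> turns the sum into a
    polynomial in \<open>x2\<close> over \<open>\<complex>[x1]\<close> whose coefficients are the numerators \<open>b l\<close>.\<close>
  obtain D b where D: "D \<noteq> 0" and b: "\<And>l. l \<in> S \<Longrightarrow> a l * of_poly_x1 D = of_poly_x1 (b l)"
    using ratfun_x1_common_denominator[OF S a] by blast
  define N where "N = (\<Sum>l\<in>S. nat \<bar>l\<bar>)"
  have N: "- int N \<le> l" if "l \<in> S" for l
  proof -
    have "nat \<bar>l\<bar> \<le> N" unfolding N_def using S that by (intro member_le_sum) auto
    then show ?thesis by linarith
  qed
  define g where "g l = nat (l + int N)" for l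
  have g_inj: "inj_on g S"
  proof (rule inj_onI)
    fix x y assume "x \<in> S" "y \<in> S" "g x = g y"
    then show "x = y" using N[of x] N[of y] unfolding g_def by (simp add: nat_eq_iff)
  qed
  have "0 = of_poly_x1 D * x2 ^ N * (\<Sum>l\<in>S. a l * x2 powi l)"
    using sum_0 by simp
  also have "\<dots> = (\<Sum>l\<in>S. to_fract (monom (b l) (g l)))"
    unfolding sum_distrib_left
  proof (rule sum.cong[OF refl])
    fix l assume l: "l \<in> S"
    have "x2 powi l * x2 ^ N = x2 powi (l + int N)"
      by (simp add: power_int_add x2_nonzero)
    also have "\<dots> = x2 ^ g l"
      using N[OF l] by (simp add: g_def power_int_def)
    finally have "of_poly_x1 D * x2 ^ N * (a l * x2 powi l) = (a l * of_poly_x1 D) * x2 ^ g l"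
      by (simp only: mult_ac)
    then show "of_poly_x1 D * x2 ^ N * (a l * x2 powi l) = to_fract (monom (b l) (g l))"
      by (simp only: b[OF l] of_poly_x1_times_x2_power)
  qed
  finally have monoms_0: "(\<Sum>l\<in>S. monom (b l) (g l)) = 0"
    by (metis to_fract_sum to_fract_eq_0_iff)
  show ?thesis
  proof
    fix l assume l: "l \<in> S"
    have "coeff (\<Sum>j\<in>S. monom (b j) (g j)) (g l) = (\<Sum>j\<in>S. if j = l then b j else 0)"
      unfolding coeff_sum coeff_monom
      by (rule sum.cong[OF refl]) (use g_inj l in \<open>auto simp: inj_on_def\<close>)
    also have "\<dots> = b l"
      using S l by simp
    finally have "coeff (\<Sum>j\<in>S. monom (b j) (g j)) (g l) = b l" .
    then have "b l = 0" using monoms_0 by simp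
    then show "a l = 0" using b[OF l] D by simp
  qed
qed

lemma x2_expansion_unique:
  assumes S: "finite S" and T: "finite T"
    and a: "\<forall>l\<in>S. a l \<in> ratfun_x1" and b: "\<forall>l\<in>T. b l \<in> ratfun_x1"
    and eq: "(\<Sum>l\<in>S. a l * x2 powi l) = (\<Sum>l\<in>T. b l * x2 powi l)"
  shows "(if l \<in> S then a l else 0) = (if l \<in> T then b l else 0)"
proof -
  define a' where "a' l = (if l \<in> S then a l else 0)" for l
  define b' where "b' l = (if l \<in> T then b l else 0)" for l
  have "(\<Sum>l\<in>S. a l * x2 powi l) = (\<Sum>l\<in>S \<union> T. a' l * x2 powi l)"
    using S T by (intro sum.mono_neutral_cong_left) (auto simp: a'_def)
  moreover have "(\<Sum>l\<in>T. b l * x2 powi l) = (\<Sum>l\<in>S \<union> T. b' l * x2 powi l)"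
    using S T by (intro sum.mono_neutral_cong_left) (auto simp: b'_def)
  ultimately have "(\<Sum>l\<in>S \<union> T. (a' l - b' l) * x2 powi l) = 0"
    using eq by (simp add: left_diff_distrib sum_subtractf)
  moreover have "\<forall>l\<in>S \<union> T. a' l - b' l \<in> ratfun_x1"
    using a b by (simp add: a'_def b'_def ratfun_x1_diff zero_in_ratfun_x1)
  ultimately have "\<forall>l\<in>S \<union> T. a' l - b' l = 0"
    using S T by (intro x2_expansion_eq_0) auto
  then show ?thesis
    by (cases "l \<in> S \<union> T") (auto simp: a'_def b'_def)
qed

section \<open>Substitutions and the mutation maps\<close>

lemma is_ring_hom_subst2: "is_ring_hom (subst2 y1 y2)"
  unfolding subst2_def[abs_def]
  by (intro is_ring_hom_poly_eval is_ring_hom_cK)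

lemma poly_map_cK_x1: "poly (map_poly cK q) x1 = of_poly_x1 q"
proof (induction q)
  case (pCons a q)
  have "of_poly_x1 (pCons a q) = of_poly_x1 [:a:] + of_poly_x1 [:0, 1:] * of_poly_x1 q"
    by (simp flip: of_poly_x1_add of_poly_x1_mult)
  then show ?case
    using pCons.IH by (simp add: map_poly_pCons cK_0 cK_eq_of_poly_x1 x1_eq_of_poly_x1)
qed (simp add: cK_0)

lemma subst2_x1_eq: "subst2 x1 y2 p = poly (map_poly of_poly_x1 p) y2"
  by (simp add: subst2_def poly_map_cK_x1)

lemma subst2_const: "subst2 y1 y2 [:[:c:]:] = cK c"
  by (simp add: subst2_def cK_0 map_poly_pCons)

lemma subst2_x1: "subst2 y1 y2 [:[:0, 1:]:] = y1"
  by (simp add: subst2_def cK_0 cK_1 map_poly_pCons)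

lemma subst2_x2: "subst2 y1 y2 [:0, 1:] = y2"
  by (simp add: subst2_def cK_0 cK_1 map_poly_pCons)

text \<open>If the substitution \<open>x1 := y1, x2 := y2\<close> kills no nonzero polynomial, it extends to
  the fraction field; \<open>fract_subst\<close> below is that extension, written with the same
  choice operator as the definition of \<open>mu\<close>.\<close>

definition alg_indep :: "K \<Rightarrow> K \<Rightarrow> bool" where
  "alg_indep y1 y2 \<longleftrightarrow> (\<forall>q. q \<noteq> 0 \<longrightarrow> subst2 y1 y2 q \<noteq> 0)"

lemma alg_indep_x1_x2_times:
  assumes r: "r \<in> ratfun_x1" "r \<noteq> 0"
  shows "alg_indep x1 (x2 * r)"
  unfolding alg_indep_def
proof (intro allI impI notI)
  fix q :: "complex poly poly"
  assume q: "q \<noteq> 0" and subst_0: "subst2 x1 (x2 * r) q = 0"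
  define d where "d = degree q"
  have "subst2 x1 (x2 * r) q = (\<Sum>i\<le>d. of_poly_x1 (coeff q i) * (x2 * r) ^ i)"
    unfolding subst2_x1_eq poly_altdef[of "map_poly of_poly_x1 q"] d_def
    by (simp add: coeff_map_poly degree_map_poly)
  also have "\<dots> = (\<Sum>l\<in>int ` {..d}. (of_poly_x1 (coeff q (nat l)) * r ^ nat l) * x2 powi l)"
    by (subst sum.reindex) (auto simp: inj_on_def power_mult_distrib mult_ac)
  finally have "\<forall>l\<in>int ` {..d}. of_poly_x1 (coeff q (nat l)) * r ^ nat l = 0"
    using subst_0 r(1)
    by (intro x2_expansion_eq_0)
       (auto intro!: ratfun_x1_mult ratfun_x1_power of_poly_x1_in_ratfun_x1)
  then have "coeff q i = 0" if "i \<le> d" for i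
    using that r(2) by force
  then have "coeff q d = 0" by simp
  then show False
    using q by (simp add: d_def)
qed

definition fract_subst :: "K \<Rightarrow> K \<Rightarrow> K \<Rightarrow> K" where
  "fract_subst y1 y2 f =
     (SOME r. \<exists>p q. q \<noteq> 0 \<and> f = Fract p q \<and> r = subst2 y1 y2 p / subst2 y1 y2 q)"

lemma fract_subst_Fract:
  assumes indep: "alg_indep y1 y2" and q: "q \<noteq> 0"
  shows "fract_subst y1 y2 (Fract p q) = subst2 y1 y2 p / subst2 y1 y2 q"
proof -
  let ?S = "subst2 y1 y2"
  have "\<exists>r p' q'. q' \<noteq> 0 \<and> Fract p q = Fract p' q' \<and> r = ?S p' / ?S q'"
    using q by blast
  from someI_ex[OF this] obtain p' q' where pq: "q' \<noteq> 0" "Fract p q = Fract p' q'"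
    and subst: "fract_subst y1 y2 (Fract p q) = ?S p' / ?S q'"
    unfolding fract_subst_def by blast
  have "p * q' = p' * q"
    using pq q by (simp add: eq_fract)
  then have "?S p * ?S q' = ?S p' * ?S q"
    by (metis is_ring_hom_mult[OF is_ring_hom_subst2])
  moreover have "?S q \<noteq> 0" "?S q' \<noteq> 0"
    using indep q pq(1) unfolding alg_indep_def by auto
  ultimately show ?thesis
    unfolding subst by (simp add: frac_eq_eq)
qed

lemma is_ring_hom_fract_subst:
  assumes indep: "alg_indep y1 y2"
  shows "is_ring_hom (fract_subst y1 y2)"
proof -
  let ?S = "subst2 y1 y2"
  have nz: "q \<noteq> 0 \<Longrightarrow> ?S q \<noteq> 0" for q
    using indep unfolding alg_indep_def by auto
  note hom = is_ring_hom_add[OF is_ring_hom_subst2] is_ring_hom_mult[OF is_ring_hom_subst2]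
  have "fract_subst y1 y2 (f + g) = fract_subst y1 y2 f + fract_subst y1 y2 g"
    and "fract_subst y1 y2 (f * g) = fract_subst y1 y2 f * fract_subst y1 y2 g" for f g
    by (cases f, cases g, simp add: fract_subst_Fract[OF indep] hom nz field_simps)+
  moreover have "fract_subst y1 y2 1 = 1"
    using fract_subst_Fract[OF indep, of 1 1] nz[of 1]
    by (simp add: One_fract_def is_ring_hom_1[OF is_ring_hom_subst2])
  ultimately show ?thesis
    by (simp add: is_ring_hom_def)
qed

lemma fract_subst_to_fract: "alg_indep y1 y2 \<Longrightarrow> fract_subst y1 y2 (to_fract p) = subst2 y1 y2 p"
  using fract_subst_Fract[of y1 y2 1 p]
  by (simp add: to_fract_def is_ring_hom_1[OF is_ring_hom_subst2])

lemma mu_e2: "mu k (0, 1) = fract_subst x1 (x2 * inverse (1 + x1 powi k))"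
  by (simp add: fun_eq_iff mu_def fract_subst_def omega_def monoX_def power_int_minus Let_def)

lemma mu_minus_e2: "mu k (0, -1) = fract_subst x1 (x2 * (1 + x1 powi (- k)))"
  by (simp add: fun_eq_iff mu_def fract_subst_def omega_def monoX_def Let_def)

section \<open>Endomorphisms rescaling the second variable\<close>

definition x2_scaling :: "(K \<Rightarrow> K) \<Rightarrow> K \<Rightarrow> bool" where
  "x2_scaling g r \<longleftrightarrow> is_ring_hom g \<and> g x1 = x1 \<and> (\<forall>c. g (cK c) = cK c) \<and> g x2 = x2 * r"

lemma x2_scaling_fract_subst:
  assumes "r \<in> ratfun_x1" "r \<noteq> 0"
  shows "x2_scaling (fract_subst x1 (x2 * r)) r"
  using alg_indep_x1_x2_times[OF assms]
  by (simp add: x2_scaling_def is_ring_hom_fract_subst fract_subst_to_fract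
      x1_to_fract x2_to_fract cK_to_fract subst2_x1 subst2_x2 subst2_const)

lemma x2_scaling_fixes_ratfun_x1:
  assumes g: "x2_scaling g r" and x: "x \<in> ratfun_x1"
  shows "g x = x"
proof -
  have hom: "is_ring_hom g"
    using g by (simp add: x2_scaling_def)
  have "g (of_poly_x1 p) = of_poly_x1 p" for p
  proof -
    have "of_poly_x1 p = (\<Sum>i\<le>degree (map_poly cK p). cK (coeff p i) * x1 ^ i)"
      by (simp add: poly_altdef coeff_map_poly cK_0 flip: poly_map_cK_x1)
    then show ?thesis
      using g by (simp add: x2_scaling_def is_ring_hom_sum[OF hom] is_ring_hom_mult[OF hom]
          is_ring_hom_power[OF hom])
  qed
  then show ?thesis
    using x by (auto elim!: ratfun_x1E simp: is_ring_hom_divide[OF hom])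
qed

lemma x2_scaling_funpow:
  assumes g: "x2_scaling g r" and r: "r \<in> ratfun_x1"
  shows "x2_scaling (g ^^ n) (r ^ n)"
proof (induction n)
  case 0
  then show ?case
    by (simp add: x2_scaling_def is_ring_hom_def)
next
  case (Suc n)
  have hom: "is_ring_hom g"
    using g by (simp add: x2_scaling_def)
  have "g (x2 * r ^ n) = x2 * r ^ Suc n"
    using g x2_scaling_fixes_ratfun_x1[OF g r]
    by (simp add: x2_scaling_def is_ring_hom_mult[OF hom] is_ring_hom_power[OF hom] mult_ac)
  then show ?case
    using Suc g is_ring_hom_funpow[OF hom, of "Suc n"]
    by (simp add: x2_scaling_def del: funpow.simps) simp
qed

lemma x2_scaling_expansion:
  assumes g: "x2_scaling g r" and p: "\<forall>l\<in>S. p l \<in> ratfun_x1"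
  shows "g (\<Sum>l\<in>S. p l * x2 powi l) = (\<Sum>l\<in>S. (p l * r powi l) * x2 powi l)"
proof -
  have hom: "is_ring_hom g"
    using g by (simp add: x2_scaling_def)
  show ?thesis
    unfolding is_ring_hom_sum[OF hom]
    using g p x2_scaling_fixes_ratfun_x1[OF g]
    by (intro sum.cong refl)
       (simp add: x2_scaling_def is_ring_hom_mult[OF hom] is_ring_hom_power_int[OF hom]
         power_int_mult_distrib mult_ac)
qed

lemma x2_scaling_x1:
  assumes "x2_scaling g r"
  shows "g x1 = x1" "g (inverse x1) = inverse x1"
  using assms by (simp_all add: x2_scaling_def is_ring_hom_inverse)

lemma x2_scaling_x2_times:
  assumes g: "x2_scaling g r" and a: "a \<in> ratfun_x1"
  shows "g (x2 * a) = x2 * r * a"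
  using g x2_scaling_fixes_ratfun_x1[OF g a]
  by (simp add: x2_scaling_def is_ring_hom_mult)

lemma x2_scaling_divide_x2:
  assumes g: "x2_scaling g r" and a: "a \<in> ratfun_x1"
  shows "g (a / x2) = a / (x2 * r)"
  using g x2_scaling_fixes_ratfun_x1[OF g a]
  by (simp add: x2_scaling_def is_ring_hom_divide)

lemma x2_scaling_image_coeff:
  assumes g: "x2_scaling g r" and r: "r \<in> ratfun_x1" and P: "P \<in> LaurentPolys"
    and S: "finite S" and c: "\<forall>l\<in>S. c l \<in> ratfun_x1"
    and gP: "g P = (\<Sum>l\<in>S. c l * x2 powi l)" and l: "l \<in> S"
  shows "\<exists>p\<in>LaurentPolys1. c l = p * r powi l"
proof -
  obtain T p where T: "finite T" "\<forall>l\<in>T. p l \<in> LaurentPolys1"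
    and P_eq: "P = (\<Sum>l\<in>T. p l * x2 powi l)"
    using LaurentPolys_x2_expansion[OF P] .
  have p: "\<forall>l\<in>T. p l \<in> ratfun_x1"
    using T(2) LaurentPolys1_subset_ratfun_x1 by blast
  have "(\<Sum>l\<in>S. c l * x2 powi l) = (\<Sum>l\<in>T. (p l * r powi l) * x2 powi l)"
    using gP x2_scaling_expansion[OF g p] by (simp add: P_eq)
  then have "c l = (if l \<in> T then p l * r powi l else 0)"
    using x2_expansion_unique[OF S T(1) c, of "\<lambda>l. p l * r powi l" l] p r l
    by (simp add: ratfun_x1_mult ratfun_x1_power_int)
  then show ?thesis
    using T(2) zero_in_LaurentPolys1 by (cases "l \<in> T") auto
qed

lemma x2_scaling_mu_e2_funpow:
  assumes "k \<noteq> 0"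
  shows "x2_scaling (mu k (0, 1) ^^ n) (inverse (1 + x1 powi k) ^ n)"
  using one_plus_x1_power_int_nonzero[OF assms] one_plus_x1_power_int_in_ratfun_x1
  by (simp add: mu_e2 x2_scaling_funpow x2_scaling_fract_subst ratfun_x1_inverse)

lemma x2_scaling_mu_minus_e2_funpow:
  assumes "k \<noteq> 0"
  shows "x2_scaling (mu k (0, -1) ^^ n) ((1 + x1 powi (- k)) ^ n)"
  using one_plus_x1_power_int_nonzero[of "- k"] assms one_plus_x1_power_int_in_ratfun_x1
  by (simp add: mu_minus_e2 x2_scaling_funpow x2_scaling_fract_subst)

section \<open>The upper bound as a set of expansions\<close>

lemma upper_bound_coll2:
  "upper_bound k (coll2 m1 m2) =
     LaurentPolys \<inter> (mu k (0, 1) ^^ m1) ` LaurentPolys \<inter> (mu k (0, -1) ^^ m2) ` LaurentPolys"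
proof -
  define F where "F v = (mu k v ^^ coll2 m1 m2 v) ` LaurentPolys" for v
  have F_other: "F v = LaurentPolys" if "v \<noteq> (0, 1)" "v \<noteq> (0, -1)" for v
    using that by (simp add: F_def coll2_def)
  have "LaurentPolys \<inter> (\<Inter>v. F v) = LaurentPolys \<inter> F (0, 1) \<inter> F (0, -1)"
  proof (intro equalityI subsetI)
    fix x assume x: "x \<in> LaurentPolys \<inter> F (0, 1) \<inter> F (0, -1)"
    have "x \<in> F v" for v
      using x F_other[of v] by (cases "v = (0, 1)"; cases "v = (0, -1)") auto
    then show "x \<in> LaurentPolys \<inter> (\<Inter>v. F v)"
      using x by blast
  qed blast
  then show ?thesis
    by (simp add: upper_bound_def F_def coll2_def)
qed

definition coeff_divisible_set :: "int \<Rightarrow> nat \<Rightarrow> nat \<Rightarrow> K set" where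
  "coeff_divisible_set k m1 m2 =
     {W. \<exists>S c. finite S \<and> (\<forall>l\<in>S. c l \<in> LaurentPolys1)
           \<and> W = (\<Sum>l\<in>S. c l * x2 powi l)
           \<and> (\<forall>l\<in>S. l \<le> 0 \<longrightarrow>
                 (\<exists>d\<in>LaurentPolys1. c l = (1 + x1 powi k) ^ nat (- int m1 * l) * d))
           \<and> (\<forall>l\<in>S. l \<ge> 0 \<longrightarrow>
                 (\<exists>d\<in>LaurentPolys1. c l = (1 + x1 powi k) ^ nat (int m2 * l) * d))}"

lemma upper_bound_subset_coeff_divisible:
  assumes k: "k \<noteq> 0"
    and W: "W \<in> LaurentPolys" "W \<in> (mu k (0, 1) ^^ m1) ` LaurentPolys"
      "W \<in> (mu k (0, -1) ^^ m2) ` LaurentPolys"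
  shows "W \<in> coeff_divisible_set k m1 m2"
proof -
  let ?u = "1 + x1 powi k"
  obtain S c where S: "finite S" "\<forall>l\<in>S. c l \<in> LaurentPolys1"
    and W_eq: "W = (\<Sum>l\<in>S. c l * x2 powi l)"
    using LaurentPolys_x2_expansion[OF W(1)] .
  have c: "\<forall>l\<in>S. c l \<in> ratfun_x1"
    using S(2) LaurentPolys1_subset_ratfun_x1 by blast
  have u: "?u \<in> ratfun_x1"
    by (rule one_plus_x1_power_int_in_ratfun_x1)
  have "\<exists>d\<in>LaurentPolys1. c l = ?u ^ nat (- int m1 * l) * d" if l: "l \<in> S" "l \<le> 0" for l
  proof -
    obtain P where P: "P \<in> LaurentPolys" "(mu k (0, 1) ^^ m1) P = (\<Sum>l\<in>S. c l * x2 powi l)"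
      using W(2) W_eq by blast
    have r: "inverse ?u ^ m1 \<in> ratfun_x1"
      using u by (intro ratfun_x1_power ratfun_x1_inverse)
    obtain p where "p \<in> LaurentPolys1" "c l = p * (inverse ?u ^ m1) powi l"
      using x2_scaling_image_coeff[OF x2_scaling_mu_e2_funpow[OF k] r P(1) S(1) c P(2) l(1)]
      by blast
    then show ?thesis
      using l(2) by (auto simp: power_int_inverse_power_nonpos mult.commute)
  qed
  moreover have "\<exists>d\<in>LaurentPolys1. c l = ?u ^ nat (int m2 * l) * d" if l: "l \<in> S" "l \<ge> 0" for l
  proof -
    obtain Q where Q: "Q \<in> LaurentPolys" "(mu k (0, -1) ^^ m2) Q = (\<Sum>l\<in>S. c l * x2 powi l)"
      using W(3) W_eq by blast
    have r: "(1 + x1 powi (- k)) ^ m2 \<in> ratfun_x1"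
      by (intro ratfun_x1_power one_plus_x1_power_int_in_ratfun_x1)
    obtain q where q: "q \<in> LaurentPolys1" "c l = q * ((1 + x1 powi (- k)) ^ m2) powi l"
      using x2_scaling_image_coeff[OF x2_scaling_mu_minus_e2_funpow[OF k] r Q(1) S(1) c Q(2) l(1)]
      by blast
    have "c l = q * (1 + x1 powi (- k)) ^ nat (int m2 * l)"
      using q(2) power_int_power_nonneg[OF l(2), where u = "1 + x1 powi (- k)" and m = m2] by simp
    then have "c l = ?u ^ nat (int m2 * l) * (q * (x1 powi (- k)) ^ nat (int m2 * l))"
      by (simp add: one_plus_x1_power_int_uminus power_mult_distrib mult_ac)
    then show ?thesis
      using q(1)
      by (blast intro: LaurentPolys1_mult LaurentPolys1_power x1_power_int_in_LaurentPolys1)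
  qed
  ultimately show ?thesis
    unfolding coeff_divisible_set_def using S W_eq by blast
qed

section \<open>The upper bound as a generated algebra\<close>

definition upper_bound_gens :: "int \<Rightarrow> nat \<Rightarrow> nat \<Rightarrow> K set" where
  "upper_bound_gens k m1 m2 =
     {x1, inverse x1, x2 * (1 + x1 powi k) ^ m2, (1 + x1 powi k) ^ m1 / x2}"

lemma alg_gen_power: "a \<in> alg_gen G \<Longrightarrow> a ^ n \<in> alg_gen G"
  using alg_gen.const[OF one_in_Qcyc, of G]
  by (induction n) (auto simp: cK_1 intro: alg_gen.mult)

lemma alg_gen_sum: "(\<And>t. t \<in> T \<Longrightarrow> f t \<in> alg_gen G) \<Longrightarrow> sum f T \<in> alg_gen G"
  using alg_gen.const[OF zero_in_Qcyc, of G]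
  by (induction T rule: infinite_finite_induct) (auto simp: cK_0 intro: alg_gen.add)

lemma LaurentPolys1_subset_alg_gen:
  assumes "x1 \<in> G" "inverse x1 \<in> G"
  shows "LaurentPolys1 \<subseteq> alg_gen G"
proof
  have x1_powi: "x1 powi a \<in> alg_gen G" for a
    using assms by (cases "a \<ge> 0") (simp_all add: power_int_def alg_gen_power alg_gen.gen)
  fix x assume "x \<in> LaurentPolys1"
  then obtain S c where "\<forall>a\<in>S. c a \<in> Qcyc" "x = (\<Sum>a\<in>S. cK (c a) * x1 powi a)"
    unfolding LaurentPolys1_eq_span by (rule Qcyc_spanE)
  then show "x \<in> alg_gen G"
    by (auto intro!: alg_gen_sum alg_gen.mult alg_gen.const x1_powi)
qed

lemma coeff_divisible_subset_alg_gen: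
  assumes "W \<in> coeff_divisible_set k m1 m2"
  shows "W \<in> alg_gen (upper_bound_gens k m1 m2)"
proof -
  let ?A = "alg_gen (upper_bound_gens k m1 m2)"
  let ?u = "1 + x1 powi k"
  obtain S c where W_eq: "W = (\<Sum>l\<in>S. c l * x2 powi l)"
    and neg: "\<forall>l\<in>S. l \<le> 0 \<longrightarrow> (\<exists>d\<in>LaurentPolys1. c l = ?u ^ nat (- int m1 * l) * d)"
    and pos: "\<forall>l\<in>S. l \<ge> 0 \<longrightarrow> (\<exists>d\<in>LaurentPolys1. c l = ?u ^ nat (int m2 * l) * d)"
    using assms unfolding coeff_divisible_set_def by blast
  have LP1: "d \<in> ?A" if "d \<in> LaurentPolys1" for d
    using LaurentPolys1_subset_alg_gen[of "upper_bound_gens k m1 m2"] that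
    by (auto simp: upper_bound_gens_def)
  have gen: "g \<in> ?A" if "g \<in> upper_bound_gens k m1 m2" for g
    using that by (rule alg_gen.gen)
  have "c l * x2 powi l \<in> ?A" if l: "l \<in> S" for l
  proof (cases "l \<ge> 0")
    case True
    then obtain d n where d: "d \<in> LaurentPolys1" "c l = ?u ^ nat (int m2 * l) * d"
      and n: "l = int n"
      using pos l by (metis nonneg_int_cases)
    have "c l * x2 powi l = d * (x2 * ?u ^ m2) ^ n"
      unfolding d(2) unfolding n
      by (simp add: nat_mult_distrib power_mult power_mult_distrib mult_ac)
    also have "\<dots> \<in> ?A"
      by (intro alg_gen.mult LP1 d(1) alg_gen_power gen) (simp add: upper_bound_gens_def)
    finally show ?thesis .
  next
    case False
    then obtain d n where d: "d \<in> LaurentPolys1" "c l = ?u ^ nat (- int m1 * l) * d"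
      and n: "l = - int n"
      using neg l by (metis linorder_linear neg_int_cases nonpos_int_cases)
    have "c l * x2 powi l = d * (?u ^ m1 / x2) ^ n"
      unfolding d(2) unfolding n
      by (simp add: nat_mult_distrib power_mult power_mult_distrib power_int_minus
          power_divide divide_inverse power_inverse mult_ac)
    also have "\<dots> \<in> ?A"
      by (intro alg_gen.mult LP1 d(1) alg_gen_power gen) (simp add: upper_bound_gens_def)
    finally show ?thesis .
  qed
  then show ?thesis
    unfolding W_eq by (rule alg_gen_sum)
qed

definition Qcyc_subalgebra :: "K set \<Rightarrow> bool" where
  "Qcyc_subalgebra A \<longleftrightarrow> (\<forall>c\<in>Qcyc. cK c \<in> A) \<and> (\<forall>a\<in>A. \<forall>b\<in>A. a + b \<in> A \<and> a * b \<in> A)"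

lemma alg_gen_subset:
  assumes "Qcyc_subalgebra A" "G \<subseteq> A"
  shows "alg_gen G \<subseteq> A"
proof
  fix x assume "x \<in> alg_gen G"
  then show "x \<in> A"
    by (induction rule: alg_gen.induct) (use assms in \<open>auto simp: Qcyc_subalgebra_def\<close>)
qed

lemma Qcyc_subalgebra_LaurentPolys: "Qcyc_subalgebra LaurentPolys"
  by (simp add: Qcyc_subalgebra_def cK_in_LaurentPolys LaurentPolys_add LaurentPolys_mult)

lemma Qcyc_subalgebra_image:
  assumes "Qcyc_subalgebra A" "x2_scaling g r"
  shows "Qcyc_subalgebra (g ` A)"
  using assms unfolding Qcyc_subalgebra_def x2_scaling_def
  by (auto simp flip: is_ring_hom_add is_ring_hom_mult intro!: image_eqI)

lemma Qcyc_subalgebra_Int: "Qcyc_subalgebra A \<Longrightarrow> Qcyc_subalgebra B \<Longrightarrow> Qcyc_subalgebra (A \<inter> B)"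
  by (simp add: Qcyc_subalgebra_def)

lemma upper_bound_gens_subset_LaurentPolys: "upper_bound_gens k m1 m2 \<subseteq> LaurentPolys"
proof -
  have "x2 powi 1 * (1 + x1 powi k) ^ m2 \<in> LaurentPolys"
    and "(1 + x1 powi k) ^ m1 * x2 powi (- 1) \<in> LaurentPolys"
    and "x1 powi 1 \<in> LaurentPolys" "x1 powi (- 1) \<in> LaurentPolys"
    by (intro LaurentPolys_mult LaurentPolys_power one_plus_x1_power_int_in_LaurentPolys
        x1_power_int_in_LaurentPolys x2_power_int_in_LaurentPolys)+
  then show ?thesis
    by (simp add: upper_bound_gens_def power_int_minus divide_inverse)
qed

lemma upper_bound_gens_subset_mu_e2_image:
  assumes k: "k \<noteq> 0"
  shows "upper_bound_gens k m1 m2 \<subseteq> (mu k (0, 1) ^^ m1) ` LaurentPolys"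
proof -
  let ?u = "1 + x1 powi k"
  let ?g = "mu k (0, 1) ^^ m1"
  have g: "x2_scaling ?g (inverse ?u ^ m1)"
    by (rule x2_scaling_mu_e2_funpow[OF k])
  have u: "?u \<in> ratfun_x1" "?u \<noteq> 0"
    using one_plus_x1_power_int_in_ratfun_x1 one_plus_x1_power_int_nonzero[OF k] .
  note fix_x1 = x2_scaling_x1[OF g]
  have "?g (x2 * ?u ^ (m1 + m2)) = x2 * inverse ?u ^ m1 * ?u ^ (m1 + m2)"
    by (rule x2_scaling_x2_times[OF g ratfun_x1_power[OF u(1)]])
  then have gen3: "?g (x2 * ?u ^ (m1 + m2)) = x2 * ?u ^ m2"
    using u(2) by (simp add: power_add power_inverse field_simps)
  have gen4: "?g (1 / x2) = ?u ^ m1 / x2"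
    using x2_scaling_divide_x2[OF g, of 1] of_poly_x1_in_ratfun_x1[of 1] u(2)
    by (simp add: of_poly_x1_1 power_inverse field_simps)
  have "{x1, inverse x1, x2 * ?u ^ (m1 + m2), 1 / x2} \<subseteq> LaurentPolys"
    using upper_bound_gens_subset_LaurentPolys[of k 0 "m1 + m2"] by (simp add: upper_bound_gens_def)
  then show ?thesis
    unfolding upper_bound_gens_def insert_subset using fix_x1 gen3 gen4
    by (metis rev_image_eqI empty_subsetI)
qed

lemma upper_bound_gens_subset_mu_minus_e2_image:
  assumes k: "k \<noteq> 0"
  shows "upper_bound_gens k m1 m2 \<subseteq> (mu k (0, -1) ^^ m2) ` LaurentPolys"
proof -
  let ?u = "1 + x1 powi k"
  let ?s = "1 + x1 powi (- k)"
  let ?g = "mu k (0, -1) ^^ m2"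
  have g: "x2_scaling ?g (?s ^ m2)"
    by (rule x2_scaling_mu_minus_e2_funpow[OF k])
  have u: "?u \<in> ratfun_x1" "?s \<in> ratfun_x1"
    using one_plus_x1_power_int_in_ratfun_x1 by auto
  have s: "?s \<noteq> 0"
    using one_plus_x1_power_int_nonzero[of "- k"] k by simp
  have x1: "x1 powi k \<in> ratfun_x1"
    by (simp add: x1_eq_of_poly_x1 of_poly_x1_in_ratfun_x1 ratfun_x1_power_int)
  note fix_x1 = x2_scaling_x1[OF g]
  have "?s * x1 powi k = ?u"
    by (simp add: power_int_minus distrib_right x1_nonzero)
  then have "?s ^ m2 * (x1 powi k) ^ m2 = ?u ^ m2"
    by (metis power_mult_distrib)
  moreover have "?g (x2 * (x1 powi k) ^ m2) = x2 * ?s ^ m2 * (x1 powi k) ^ m2"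
    by (rule x2_scaling_x2_times[OF g ratfun_x1_power[OF x1]])
  ultimately have gen3: "?g (x2 * (x1 powi k) ^ m2) = x2 * ?u ^ m2"
    by (simp add: mult.assoc)
  have gen4: "?g (?u ^ m1 * ?s ^ m2 / x2) = ?u ^ m1 / x2"
    using x2_scaling_divide_x2[OF g] u s by (simp add: ratfun_x1_mult ratfun_x1_power)
  have "?u ^ m1 * ?s ^ m2 * x2 powi (- 1) \<in> LaurentPolys"
    and "x2 powi 1 * (x1 powi k) ^ m2 \<in> LaurentPolys"
    by (intro LaurentPolys_mult LaurentPolys_power one_plus_x1_power_int_in_LaurentPolys
        x1_power_int_in_LaurentPolys x2_power_int_in_LaurentPolys)+
  moreover have "x1 \<in> LaurentPolys" "inverse x1 \<in> LaurentPolys"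
    using upper_bound_gens_subset_LaurentPolys[of k m1 m2] by (auto simp: upper_bound_gens_def)
  ultimately have "{x1, inverse x1, x2 * (x1 powi k) ^ m2, ?u ^ m1 * ?s ^ m2 / x2} \<subseteq> LaurentPolys"
    by (simp add: power_int_minus divide_inverse)
  then show ?thesis
    unfolding upper_bound_gens_def insert_subset using fix_x1 gen3 gen4
    by (metis rev_image_eqI empty_subsetI)
qed

lemma alg_gen_subset_upper_bound:
  assumes "k \<noteq> 0"
  shows "alg_gen (upper_bound_gens k m1 m2) \<subseteq>
    LaurentPolys \<inter> (mu k (0, 1) ^^ m1) ` LaurentPolys \<inter> (mu k (0, -1) ^^ m2) ` LaurentPolys"
  using upper_bound_gens_subset_LaurentPolys upper_bound_gens_subset_mu_e2_image[OF assms]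
    upper_bound_gens_subset_mu_minus_e2_image[OF assms]
    x2_scaling_mu_e2_funpow[OF assms] x2_scaling_mu_minus_e2_funpow[OF assms]
  by (intro alg_gen_subset Qcyc_subalgebra_Int Qcyc_subalgebra_image Qcyc_subalgebra_LaurentPolys)
    auto

theorem proposition3p6:
  fixes k :: int and m1 m2 :: nat
  assumes "k \<noteq> 0"
  shows "upper_bound k (coll2 m1 m2) =
           {W. \<exists>S c. finite S \<and> (\<forall>l\<in>S. c l \<in> LaurentPolys1)
                 \<and> W = (\<Sum>l\<in>S. c l * x2 powi l)
                 \<and> (\<forall>l\<in>S. l \<le> 0 \<longrightarrow>
                       (\<exists>d\<in>LaurentPolys1. c l = (1 + x1 powi k) ^ nat (- int m1 * l) * d))
                 \<and> (\<forall>l\<in>S. l \<ge> 0 \<longrightarrow>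
                       (\<exists>d\<in>LaurentPolys1. c l = (1 + x1 powi k) ^ nat (int m2 * l) * d))}
       \<and> upper_bound k (coll2 m1 m2) =
           alg_gen {x1, inverse x1, x2 * (1 + x1 powi k) ^ m2, (1 + x1 powi k) ^ m1 / x2}"
proof -
  have "upper_bound k (coll2 m1 m2) \<subseteq> coeff_divisible_set k m1 m2"
    using upper_bound_subset_coeff_divisible[OF assms] by (auto simp: upper_bound_coll2)
  moreover have "coeff_divisible_set k m1 m2 \<subseteq> alg_gen (upper_bound_gens k m1 m2)"
    using coeff_divisible_subset_alg_gen by blast
  moreover have "alg_gen (upper_bound_gens k m1 m2) \<subseteq> upper_bound k (coll2 m1 m2)"
    using alg_gen_subset_upper_bound[OF assms] by (simp add: upper_bound_coll2)
  ultimately have "upper_bound k (coll2 m1 m2) = coeff_divisible_set k m1 m2"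
    and "upper_bound k (coll2 m1 m2) = alg_gen (upper_bound_gens k m1 m2)"
    by auto
  then show ?thesis
    unfolding coeff_divisible_set_def upper_bound_gens_def by (rule conjI)
qed

end
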